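(* Let $n\equiv 3\pmod 4$ be a positive integer. Then $n$ is simultaneously a Carmichael number and a Gaussian Carmichael number if and only if $n$ is a $1$-Williams number and every prime $p$ dividing $n$ satisfies $p\equiv 3\pmod 4$.
   Context: A Carmichael number is a composite $n$ with $a^{n-1}\equiv 1\pmod n$ for all integers $a$ coprime to $n$ (equivalently, by Korselt's criterion, $n$ composite, square-free, and $p-1\mid n-1$ for every prime $p\mid n$). The function $\mathcal{F}$ is defined by $\mathcal{F}(n)=n-1$ if $n\equiv 1\pmod 4$, $\mathcal{F}(n)=n+1$ if $n\equiv 3 \pmod 4$, $\mathcal{F}(n)=n$ otherwise. A composite integer $n$ is a Gaussian Fermat pseudoprime to base $z\in\mathbb{Z}[i]$ if $\gcd(n,z\overline{z})=1$ and $(z/\overline{z})^{\mathcal{F}(n)}\equiv 1\pmod n$ in $\mathbb{Z}[i]/n\mathbb{Z}[i]$; a composite $n$ is a Gaussian Carmichael number if it is a Gaussian Fermat pseudoprime to every base $z\in\mathbb{Z}[i]$ with $\gcd(n,z\overline{z})=1$. A $1$-Williams number is a composite square-free integer $n$ such that for every prime $p\mid n$, $p+1\mid n+1$ and $p-1\mid n-1$. *)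

theory Defs
  imports Complex_Main "HOL-Number_Theory.Number_Theory" "HOL-Computational_Algebra.Squarefree"
begin

definition composite :: "nat \<Rightarrow> bool" where
  "composite n \<longleftrightarrow> n > 1 \<and> \<not> prime n"

definition carmichael :: "nat \<Rightarrow> bool" where
  "carmichael n \<longleftrightarrow> composite n \<and> (\<forall>a::nat. coprime a n \<longrightarrow> [a ^ (n - 1) = 1] (mod n))"

definition gauss_ints :: "complex set" where
  "gauss_ints = {z. Re z \<in> \<int> \<and> Im z \<in> \<int>}"

definition gcong :: "nat \<Rightarrow> complex \<Rightarrow> complex \<Rightarrow> bool" where
  "gcong n z w \<longleftrightarrow> (\<exists>q\<in>gauss_ints. z - w = of_nat n * q)"

definition gnorm :: "complex \<Rightarrow> int" where
  "gnorm z = \<lfloor>Re (z * cnj z)\<rfloor>"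

definition FF :: "nat \<Rightarrow> nat" where
  "FF n = (if n mod 4 = 1 then n - 1 else if n mod 4 = 3 then n + 1 else n)"

text \<open>(z / conj z)^F(n) = 1 in Z[i]/nZ[i], where 1/conj z is an inverse w of conj z modulo n.\<close>
definition gaussian_fermat_psp :: "nat \<Rightarrow> complex \<Rightarrow> bool" where
  "gaussian_fermat_psp n z \<longleftrightarrow> composite n \<and> z \<in> gauss_ints \<and> coprime (int n) (gnorm z) \<and>
     (\<exists>w\<in>gauss_ints. gcong n (cnj z * w) 1 \<and> gcong n ((z * w) ^ FF n) 1)"

definition gaussian_carmichael :: "nat \<Rightarrow> bool" where
  "gaussian_carmichael n \<longleftrightarrow> composite n \<and>
     (\<forall>z\<in>gauss_ints. coprime (int n) (gnorm z) \<longrightarrow> gaussian_fermat_psp n z)"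

definition williams1 :: "nat \<Rightarrow> bool" where
  "williams1 n \<longleftrightarrow> composite n \<and> squarefree n \<and>
     (\<forall>p. prime p \<and> p dvd n \<longrightarrow> (p + 1) dvd (n + 1) \<and> (p - 1) dvd (n - 1))"

end

theory Submission
  imports Defs
begin

text \<open>
  For a prime p dividing n, everything is read off in Z[i]/pZ[i]. The Carmichael condition is
  Korselt's criterion, which forces n to be squarefree and p - 1 to divide n - 1. By the Chinese
  remainder theorem a Gaussian integer may be prescribed freely modulo p and be congruent to 1
  modulo n/p, so the Gaussian Carmichael condition says that the image of z/conj z has order
  dividing n + 1 for every z prime to p.
  If p = 3 (mod 4), then Z[i]/pZ[i] is the field with p^2 elements, conjugation is the Frobenius
  z \<mapsto> z^p, and z/conj z = z^(1-p) ranges over the cyclic group of order p + 1; hence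
  p + 1 divides n + 1, and conversely these conditions make n a Gaussian Carmichael number.
  If p = 1 (mod 4), then i \<mapsto> s with s^2 = -1 (mod p) maps Z[i] onto Z/pZ, and
  z = 3s + i maps to 4s while conj z maps to 2s; thus 2^(n+1) = 1 (mod p), while
  2^(n-1) = 1 (mod p) as n is a Carmichael number, so p divides 3, which is absurd.
\<close>

section \<open>Korselt's criterion\<close>

lemma carmichael_iff_Carmichael_dvd:
  "carmichael n \<longleftrightarrow> composite n \<and> Carmichael n dvd n - 1"
proof (cases "composite n")
  case True
  then have "n > 0" by (simp add: composite_def)
  then obtain g where g: "g \<in> totatives n" "ord n g = Carmichael n"
    by (rule Carmichael_root_exists)
  have "Carmichael n dvd n - 1" if "carmichael n"
  proof -
    have "coprime g n" using g(1) by (simp add: totatives_def coprime_commute)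
    then have "[g ^ (n - 1) = 1] (mod n)" using that by (simp add: carmichael_def)
    then show ?thesis by (simp add: ord_divides' flip: g(2))
  qed
  moreover have "[a ^ (n - 1) = 1] (mod n)" if "Carmichael n dvd n - 1" "coprime a n" for a
    using Carmichael_divides that by (simp add: coprime_commute)
  ultimately show ?thesis
    using True by (auto simp: carmichael_def)
qed (simp add: carmichael_def)

lemma Carmichael_squarefree:
  assumes "squarefree n"
  shows "Carmichael n = (LCM p\<in>prime_factors n. p - 1)"
proof -
  have "n \<noteq> 0" using assms by (metis not_squarefree_0)
  then have "multiplicity p n = 1" if "p \<in> prime_factors n" for p
    using assms that squarefree_factorial_semiring' by blast
  then show ?thesis by (simp add: Carmichael_closed_formula cong: image_cong)
qed

lemma prime_dvd_Carmichael_if_square_dvd: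
  assumes "prime p" "p ^ 2 dvd n" "n \<noteq> 0"
  shows "p dvd Carmichael n"
proof -
  define k where "k = multiplicity p n"
  have k: "k \<ge> 2"
    using assms power_dvd_iff_le_multiplicity[of n p 2] by (auto simp: k_def prime_nat_iff)
  have "p \<in> prime_factors n"
    using assms by (auto simp: in_prime_factors_iff intro: dvd_trans[OF dvd_power[of 2 p]])
  then have "(if p = 2 \<and> k > 2 then 2 ^ (k - 2) else p ^ (k - 1) * (p - 1)) dvd Carmichael n"
    unfolding Carmichael_closed_formula[of n] k_def by (auto simp: Let_def)
  moreover have "p dvd (if p = 2 \<and> k > 2 then 2 ^ (k - 2) else p ^ (k - 1) * (p - 1))"
    using k by (auto simp: dvd_power)
  ultimately show ?thesis by (rule dvd_trans[rotated])
qed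

lemma carmichael_imp_squarefree:
  assumes "carmichael n"
  shows "squarefree n"
proof -
  have n: "n > 1" "Carmichael n dvd n - 1"
    using assms by (auto simp: carmichael_iff_Carmichael_dvd composite_def)
  have "\<not> p ^ 2 dvd n" if "prime p" for p
  proof
    assume sq: "p ^ 2 dvd n"
    then have "p dvd n" by (rule dvd_trans[rotated]) simp
    moreover have "p dvd n - 1"
      using prime_dvd_Carmichael_if_square_dvd[OF that sq] n by (auto intro: dvd_trans)
    ultimately have "p dvd 1" using n(1) by (metis dvd_diff_nat diff_diff_cancel less_imp_le)
    then show False using that by simp
  qed
  then show ?thesis using n(1) by (simp add: squarefree_factorial_semiring)
qed

theorem korselt:
  "carmichael n \<longleftrightarrow>
     composite n \<and> squarefree n \<and> (\<forall>p. prime p \<and> p dvd n \<longrightarrow> (p - 1) dvd (n - 1))"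
proof -
  have "Carmichael n dvd n - 1 \<longleftrightarrow> (\<forall>p. prime p \<and> p dvd n \<longrightarrow> (p - 1) dvd (n - 1))"
    if "squarefree n" for n :: nat
    using that by (auto simp: Carmichael_squarefree in_prime_factors_iff Lcm_dvd_iff)
  then show ?thesis
    using carmichael_imp_squarefree by (auto simp: carmichael_iff_Carmichael_dvd)
qed

lemma squarefree_dvd_if_prime_divisors_dvd:
  fixes n m :: nat
  assumes "squarefree n" and "\<And>p. prime p \<Longrightarrow> p dvd n \<Longrightarrow> p dvd m"
  shows "n dvd m"
proof (cases "m = 0")
  case False
  have "n \<noteq> 0" using assms(1) by (metis not_squarefree_0)
  then show ?thesis
  proof (rule multiplicity_le_imp_dvd)
    fix p :: nat assume p: "prime p"
    show "multiplicity p n \<le> multiplicity p m"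
    proof (cases "p dvd n")
      case True
      then have "multiplicity p m \<ge> 1"
        using assms(2) p False by (simp add: Suc_le_eq prime_multiplicity_gt_zero_iff)
      moreover have "multiplicity p n \<le> 1"
        using assms(1) \<open>n \<noteq> 0\<close> p squarefree_factorial_semiring'' by blast
      ultimately show ?thesis by linarith
    qed (simp add: not_dvd_imp_multiplicity_0)
  qed
qed simp

lemma cong_squarefree_modulus:
  fixes x y :: int
  assumes "squarefree n" and "\<And>p. prime p \<Longrightarrow> p dvd n \<Longrightarrow> [x = y] (mod int p)"
  shows "[x = y] (mod int n)"
proof -
  have "n dvd nat \<bar>x - y\<bar>"
  proof (rule squarefree_dvd_if_prime_divisors_dvd[OF assms(1)])
    fix p assume "prime p" "p dvd n"
    then show "p dvd nat \<bar>x - y\<bar>" using assms(2) by (simp add: cong_iff_dvd_diff)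
  qed
  then show ?thesis by (simp add: cong_iff_dvd_diff)
qed

lemma squarefree_coprime_div_prime:
  fixes n p :: nat
  assumes "squarefree n" "prime p" "p dvd n"
  shows "coprime p (n div p)"
proof -
  have "\<not> p dvd n div p"
  proof
    assume "p dvd n div p"
    then have "p * p dvd p * (n div p)" by simp
    then have "p\<^sup>2 dvd n" using assms(3) by (simp add: power2_eq_square)
    then show False using assms(1,2) squarefreeD[of n p] by (auto simp: prime_nat_iff)
  qed
  then show ?thesis using assms(2) by (simp add: prime_imp_coprime)
qed

lemma fermat_little_int:
  assumes "prime p"
  shows "[a ^ p = a] (mod int p)"
proof -
  have p0: "p > 0" using assms prime_gt_0_nat by blast
  define b where "b = nat (a mod int p)"
  have b: "[int b = a] (mod int p)" using p0 by (simp add: b_def cong_def)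
  have "[b ^ p = b] (mod p)"
  proof (cases "p dvd b")
    case True
    moreover have "b dvd b ^ p" using p0 by simp
    ultimately have "[b ^ p = 0] (mod p)" "[b = 0] (mod p)"
      by (auto simp: cong_0_iff intro: dvd_trans)
    then show ?thesis by (metis cong_sym cong_trans)
  next
    case False
    then have "[b ^ (p - 1) * b = 1 * b] (mod p)"
      using fermat_theorem assms by (blast intro: cong_mult cong_refl)
    then show ?thesis using p0 by (simp flip: power_Suc2)
  qed
  then have "[int b ^ p = int b] (mod int p)" by (metis cong_int_iff of_nat_power)
  then show ?thesis using b cong_pow by (meson cong_sym cong_trans)
qed

lemma odd_prime_not_dvd_power_two:
  assumes "prime (p::nat)" "odd p"
  shows "\<not> p dvd 2 ^ k"
  using assms prime_dvd_power[of p 2 k] primes_dvd_imp_eq[OF assms(1) two_is_prime_nat] by auto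

lemma QuadRes_minus_one_iff:
  assumes "prime p" "p > 2"
  shows "QuadRes (int p) (-1) \<longleftrightarrow> p mod 4 = 1"
proof -
  have not_cong: "\<not> [1 = -1] (mod int p)" "\<not> [-1 = 0] (mod int p)"
    using assms zdvd_imp_le[of "int p" 2] by (auto simp: cong_iff_dvd_diff)
  have "[Legendre (-1) (int p) = (-1) ^ ((p - 1) div 2)] (mod int p)"
    using euler_criterion assms by blast
  moreover have "even ((p - 1) div 2) \<longleftrightarrow> p mod 4 = 1"
    using prime_odd_nat[OF assms(1,2)] by presburger
  then have "(-1::int) ^ ((p - 1) div 2) = (if p mod 4 = 1 then 1 else -1)"
    by (simp add: minus_one_power_iff)
  moreover have "Legendre (-1) (int p) = (if QuadRes (int p) (-1) then 1 else -1)"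
    using not_cong by (simp add: Legendre_def)
  ultimately show ?thesis using not_cong by (auto split: if_splits dest: cong_sym)
qed

lemma prime_3_mod_4_dvd_sum_squares:
  assumes "prime p" "p mod 4 = 3" "int p dvd a\<^sup>2 + b\<^sup>2"
  shows "int p dvd a" "int p dvd b"
proof -
  have "int p dvd x" if "int p dvd x\<^sup>2 + y\<^sup>2" for x y
  proof (rule ccontr)
    assume "\<not> int p dvd x"
    then have "coprime (int p) x" using assms(1) by (simp add: prime_imp_coprime)
    then obtain c where "[x * c = 1] (mod int p)"
      using cong_solve_coprime_int coprime_commute by blast
    then have c: "int p dvd x * c - 1" by (simp add: cong_iff_dvd_diff)
    have "(y * c)\<^sup>2 + 1 = c\<^sup>2 * (x\<^sup>2 + y\<^sup>2) - (x * c - 1) * (x * c + 1)"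
      by (simp add: algebra_simps power2_eq_square)
    also have "int p dvd \<dots>" using that c by simp
    finally have "QuadRes (int p) (-1)"
      unfolding QuadRes_def by (auto simp: cong_iff_dvd_diff)
    moreover have "p > 2" using assms(2) by presburger
    ultimately show False using QuadRes_minus_one_iff assms(1,2) by simp
  qed
  then show "int p dvd a" "int p dvd b" using assms(3) by (metis add.commute)+
qed

section \<open>Congruences of Gaussian integers\<close>

definition gauss_int :: "int \<Rightarrow> int \<Rightarrow> complex" where
  "gauss_int a b = Complex (of_int a) (of_int b)"

lemma gauss_ints_iff: "z \<in> gauss_ints \<longleftrightarrow> (\<exists>a b. z = gauss_int a b)"
proof
  assume "z \<in> gauss_ints"
  then obtain a b where "Re z = of_int a" "Im z = of_int b"
    unfolding gauss_ints_def by (auto elim!: Ints_cases)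
  then show "\<exists>a b. z = gauss_int a b" by (auto simp: gauss_int_def complex_eq_iff)
qed (auto simp: gauss_ints_def gauss_int_def)

lemma gauss_intsE:
  assumes "z \<in> gauss_ints"
  obtains a b where "z = gauss_int a b"
  using assms gauss_ints_iff by blast

lemma gauss_int_in_gauss_ints [simp]: "gauss_int a b \<in> gauss_ints"
  using gauss_ints_iff by blast

lemma gauss_int_eq_iff [simp]: "gauss_int a b = gauss_int c d \<longleftrightarrow> a = c \<and> b = d"
  by (simp add: gauss_int_def complex_eq_iff)

lemma gauss_int_mult: "gauss_int a b * gauss_int c d = gauss_int (a * c - b * d) (a * d + b * c)"
  and gauss_int_diff: "gauss_int a b - gauss_int c d = gauss_int (a - c) (b - d)"
  and gauss_int_cnj: "cnj (gauss_int a b) = gauss_int a (- b)"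
  and gauss_int_one: "1 = gauss_int 1 0"
  and gauss_int_of_int: "of_int k = gauss_int k 0"
  and gauss_int_of_nat: "of_nat m = gauss_int (int m) 0"
  by (simp_all add: gauss_int_def complex_eq_iff)

lemma gnorm_gauss_int: "gnorm (gauss_int a b) = a\<^sup>2 + b\<^sup>2"
proof -
  have "Re (gauss_int a b * cnj (gauss_int a b)) = of_int (a\<^sup>2 + b\<^sup>2)"
    by (simp add: gauss_int_def power2_eq_square)
  then show ?thesis unfolding gnorm_def by (simp only: floor_of_int)
qed

lemma gauss_ints_closed [simp]:
  "z \<in> gauss_ints \<Longrightarrow> w \<in> gauss_ints \<Longrightarrow> z * w \<in> gauss_ints"
  "z \<in> gauss_ints \<Longrightarrow> w \<in> gauss_ints \<Longrightarrow> z + w \<in> gauss_ints"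
  "z \<in> gauss_ints \<Longrightarrow> w \<in> gauss_ints \<Longrightarrow> z - w \<in> gauss_ints"
  "z \<in> gauss_ints \<Longrightarrow> - z \<in> gauss_ints"
  "z \<in> gauss_ints \<Longrightarrow> cnj z \<in> gauss_ints"
  "1 \<in> gauss_ints" "0 \<in> gauss_ints" "of_nat m \<in> gauss_ints" "of_int k \<in> gauss_ints"
  "\<i> \<in> gauss_ints"
  by (auto simp: gauss_ints_def)

lemma gauss_ints_power [simp]: "z \<in> gauss_ints \<Longrightarrow> z ^ k \<in> gauss_ints"
  by (induction k) auto

lemma gauss_ints_sum: "(\<And>i. i \<in> A \<Longrightarrow> f i \<in> gauss_ints) \<Longrightarrow> sum f A \<in> gauss_ints"
  by (induction A rule: infinite_finite_induct) auto

lemma gcong_gauss_int: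
  "gcong n (gauss_int a b) (gauss_int c d) \<longleftrightarrow> [a = c] (mod int n) \<and> [b = d] (mod int n)"
proof
  assume "gcong n (gauss_int a b) (gauss_int c d)"
  then obtain x y where "gauss_int a b - gauss_int c d = of_nat n * gauss_int x y"
    unfolding gcong_def by (auto elim!: gauss_intsE)
  then have "a - c = int n * x" "b - d = int n * y"
    by (simp_all add: gauss_int_diff gauss_int_of_nat gauss_int_mult)
  then show "[a = c] (mod int n) \<and> [b = d] (mod int n)" by (simp add: cong_iff_dvd_diff)
next
  assume "[a = c] (mod int n) \<and> [b = d] (mod int n)"
  then obtain x y where "a - c = int n * x" "b - d = int n * y"
    by (auto simp: cong_iff_dvd_diff elim!: dvdE)
  then have "gauss_int a b - gauss_int c d = of_nat n * gauss_int x y"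
    by (simp add: gauss_int_diff gauss_int_of_nat gauss_int_mult)
  then show "gcong n (gauss_int a b) (gauss_int c d)"
    unfolding gcong_def by (intro bexI[of _ "gauss_int x y"]) auto
qed

lemma gcong_refl [simp]: "gcong n z z"
  unfolding gcong_def by (rule bexI[of _ 0]) auto

lemma gcong_sym: "gcong n z w \<Longrightarrow> gcong n w z"
  unfolding gcong_def by (auto intro!: bexI[of _ "- _"] simp: algebra_simps)

lemma gcong_trans [trans]: "gcong n z w \<Longrightarrow> gcong n w v \<Longrightarrow> gcong n z v"
proof -
  assume "gcong n z w" "gcong n w v"
  then obtain q1 q2 where "q1 \<in> gauss_ints" "q2 \<in> gauss_ints"
    "z - w = of_nat n * q1" "w - v = of_nat n * q2"
    unfolding gcong_def by blast
  then show ?thesis unfolding gcong_def by (intro bexI[of _ "q1 + q2"]) (auto simp: algebra_simps)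
qed

lemma gcong_mult:
  assumes "z \<in> gauss_ints" "w' \<in> gauss_ints" "gcong n z z'" "gcong n w w'"
  shows "gcong n (z * w) (z' * w')"
proof -
  obtain q1 q2 where q: "q1 \<in> gauss_ints" "q2 \<in> gauss_ints"
    "z - z' = of_nat n * q1" "w - w' = of_nat n * q2"
    using assms unfolding gcong_def by blast
  have "z * w - z' * w' = z * (w - w') + (z - z') * w'" by (simp add: algebra_simps)
  then have "z * w - z' * w' = of_nat n * (z * q2 + q1 * w')" by (simp add: q algebra_simps)
  then show ?thesis unfolding gcong_def using assms q by auto
qed

lemma gcong_power:
  assumes "z \<in> gauss_ints" "w \<in> gauss_ints" "gcong n z w"
  shows "gcong n (z ^ k) (w ^ k)"
  by (induction k) (auto intro!: gcong_mult simp: assms)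

lemma gcong_cnj: "gcong n z w \<Longrightarrow> gcong n (cnj z) (cnj w)"
  unfolding gcong_def by (auto intro!: bexI[of _ "cnj _"] simp flip: complex_cnj_diff)

lemma gcong_dvd_modulus: "m dvd n \<Longrightarrow> gcong n z w \<Longrightarrow> gcong m z w"
  unfolding gcong_def by (auto elim!: dvdE intro!: bexI[of _ "of_nat _ * _"])

lemma gcong_squarefree_modulus:
  assumes "squarefree n" "z \<in> gauss_ints" "w \<in> gauss_ints"
    and "\<And>p. prime p \<Longrightarrow> p dvd n \<Longrightarrow> gcong p z w"
  shows "gcong n z w"
proof -
  obtain a b c d where "z = gauss_int a b" "w = gauss_int c d"
    using assms(2,3) by (metis gauss_intsE)
  then show ?thesis
    using assms(4) by (simp add: gcong_gauss_int cong_squarefree_modulus[OF assms(1)])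
qed

lemma gcong_add_power_prime:
  assumes "prime p" "x \<in> gauss_ints" "y \<in> gauss_ints"
  shows "gcong p ((x + y) ^ p) (x ^ p + y ^ p)"
proof -
  have p0: "p > 0" using assms(1) prime_gt_0_nat by blast
  define g where "g k = of_nat ((p choose k) div p) * x ^ k * y ^ (p - k)" for k
  have "(x + y) ^ p = (\<Sum>k\<le>p. of_nat (p choose k) * x ^ k * y ^ (p - k))"
    by (simp add: binomial_ring)
  also have "{..p} = insert 0 (insert p {1..<p})" using p0 by auto
  also have "(\<Sum>k\<in>insert 0 (insert p {1..<p}). of_nat (p choose k) * x ^ k * y ^ (p - k)) =
      x ^ p + y ^ p + (\<Sum>k\<in>{1..<p}. of_nat p * g k)"
  proof -
    have "of_nat (p choose k) = (of_nat p * of_nat ((p choose k) div p) :: complex)"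
      if "k \<in> {1..<p}" for k
      using dvd_choose_prime[of k p] that assms(1) by (simp flip: of_nat_mult)
    then show ?thesis using p0 by (simp add: g_def mult.assoc)
  qed
  finally have "(x + y) ^ p - (x ^ p + y ^ p) = of_nat p * (\<Sum>k\<in>{1..<p}. g k)"
    by (simp add: sum_distrib_left)
  moreover have "(\<Sum>k\<in>{1..<p}. g k) \<in> gauss_ints"
    using assms by (intro gauss_ints_sum) (simp add: g_def)
  ultimately show ?thesis unfolding gcong_def by blast
qed

lemma imaginary_unit_power_3_mod_4:
  assumes "p mod 4 = 3"
  shows "\<i> ^ p = - \<i>"
proof -
  have "p = 4 * (p div 4) + 3" using assms by presburger
  then have "\<i> ^ p = (\<i> ^ 4) ^ (p div 4) * \<i> ^ 3" by (metis power_add power_mult)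
  also have "\<dots> = - \<i>" by (simp add: power_numeral_reduce)
  finally show ?thesis .
qed

lemma gcong_frobenius:
  assumes "prime p" "p mod 4 = 3" "z \<in> gauss_ints"
  shows "gcong p (z ^ p) (cnj z)"
proof -
  obtain a b where z: "z = gauss_int a b" using assms(3) by (rule gauss_intsE)
  have "z = of_int a + of_int b * \<i>" by (simp add: z gauss_int_def complex_eq_iff)
  then have "gcong p (z ^ p) ((of_int a) ^ p + (of_int b * \<i>) ^ p)"
    using assms(1) by (simp add: gcong_add_power_prime)
  also have "(of_int a) ^ p + (of_int b * \<i>) ^ p = gauss_int (a ^ p) (- (b ^ p))"
    using imaginary_unit_power_3_mod_4[OF assms(2)]
    by (simp add: power_mult_distrib gauss_int_def complex_eq_iff)
  also have "gcong p (gauss_int (a ^ p) (- (b ^ p))) (cnj z)"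
    using fermat_little_int[OF assms(1)]
    by (simp add: z gauss_int_cnj gcong_gauss_int cong_minus_minus_iff)
  finally show ?thesis .
qed

lemma gcong_power_Suc_prime_if_norm_one:
  assumes "prime p" "p mod 4 = 3" "u \<in> gauss_ints" "gcong p (u * cnj u) 1"
  shows "gcong p (u ^ (p + 1)) 1"
proof -
  have "gcong p (u * u ^ p) (u * cnj u)"
    using assms by (intro gcong_mult gcong_frobenius) auto
  then show ?thesis using assms(4) by (simp add: gcong_trans)
qed

section \<open>The residue ring Z[i]/mZ[i]\<close>

lemma (in comm_group) ord_dvd_if_power_mult_eq_one:
  assumes x: "x \<in> carrier G" and y: "y \<in> carrier G"
    and "x [^] p \<otimes> y = \<one>" and "(x \<otimes> y) [^] k = \<one>"
  shows "ord x dvd (p - 1) * k"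
proof -
  have "x [^] k \<otimes> y [^] k = \<one>" "(x [^] p) [^] k \<otimes> y [^] k = \<one>"
    using assms by (simp_all flip: nat_pow_distrib)
  then have "x [^] k = (x [^] p) [^] k" using x y by (metis right_cancel nat_pow_closed)
  then have "x [^] (p * k) = x [^] k" using x by (simp add: nat_pow_pow)
  then have "x [^] (p * k - k) = \<one>" using pow_eq_div2[OF x] by blast
  then show ?thesis using x by (simp add: pow_eq_id diff_mult_distrib)
qed

lemma (in field) comm_group_mult_of: "comm_group (mult_of R)"
  by (rule group.group_comm_groupI[OF field_mult_group]) (simp add: m_comm)

lemma (in field) finite_field_mult_group_has_elem_of_order:
  assumes "finite (carrier R)"
  obtains g where "g \<in> carrier (mult_of R)" "group.ord (mult_of R) g = order R - 1"
proof -
  interpret G: group "mult_of R" by (rule field_mult_group)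
  obtain g where g: "g \<in> carrier (mult_of R)"
    and gen: "carrier (mult_of R) = {g [^] i | i::nat. i \<in> UNIV}"
    using finite_field_mult_group_has_gen[OF assms] by blast
  have "G.ord g = card (generate (mult_of R) {g})" using g by (rule G.generate_pow_card)
  also have "generate (mult_of R) {g} = carrier (mult_of R)"
    using G.generate_pow_on_finite_carrier[OF finite_mult_of[OF assms] g] gen
    by (simp add: nat_pow_mult_of)
  finally show ?thesis using that g order_mult_of[OF assms] by (simp add: order_def)
qed

definition gauss_mod_ring :: "int \<Rightarrow> (int \<times> int) ring" where
  "gauss_mod_ring m = \<lparr>carrier = {0..<m} \<times> {0..<m},
     mult = (\<lambda>(a, b) (c, d). ((a * c - b * d) mod m, (a * d + b * c) mod m)),
     one = (1, 0), zero = (0, 0),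
     add = (\<lambda>(a, b) (c, d). ((a + c) mod m, (b + d) mod m))\<rparr>"

lemma gauss_mod_ring_simps:
  "carrier (gauss_mod_ring m) = {0..<m} \<times> {0..<m}"
  "(a, b) \<otimes>\<^bsub>gauss_mod_ring m\<^esub> (c, d) = ((a * c - b * d) mod m, (a * d + b * c) mod m)"
  "(a, b) \<oplus>\<^bsub>gauss_mod_ring m\<^esub> (c, d) = ((a + c) mod m, (b + d) mod m)"
  "\<one>\<^bsub>gauss_mod_ring m\<^esub> = (1, 0)"
  "\<zero>\<^bsub>gauss_mod_ring m\<^esub> = (0, 0)"
  by (simp_all add: gauss_mod_ring_def)

lemma mod_mult_add_mult_eq:
  fixes m :: int
  shows "(a mod m * b - c mod m * d) mod m = (a * b - c * d) mod m"
    and "(a mod m * b + c mod m * d) mod m = (a * b + c * d) mod m"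
    and "(a * (b mod m) - c * (d mod m)) mod m = (a * b - c * d) mod m"
    and "(a * (b mod m) + c * (d mod m)) mod m = (a * b + c * d) mod m"
  by (subst (1) mod_diff_eq[symmetric] mod_add_eq[symmetric], simp add: mod_simps)+

lemma gauss_mod_ring_abelian_group:
  assumes "m > 0"
  shows "abelian_group (gauss_mod_ring m)"
proof (rule abelian_groupI, goal_cases)
  case (6 x)
  then obtain a b where "x = (a, b)" by fastforce
  then show ?case using assms
    by (intro bexI[of _ "((- a) mod m, (- b) mod m)"]) (auto simp: gauss_mod_ring_simps mod_simps)
qed (use assms in \<open>auto simp: gauss_mod_ring_simps mod_simps ac_simps\<close>)

lemma gauss_mod_ring_comm_monoid:
  assumes "m > 1"
  shows "comm_monoid (gauss_mod_ring m)"
proof (rule comm_monoidI, goal_cases)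
  case (3 x y z)
  then show ?case
    by (cases x, cases y, cases z)
      (simp add: gauss_mod_ring_simps mod_mult_add_mult_eq, simp add: algebra_simps)
qed (use assms in \<open>auto simp: gauss_mod_ring_simps algebra_simps\<close>)

lemma gauss_mod_ring_cring:
  assumes "m > 1"
  shows "cring (gauss_mod_ring m)"
proof (rule cringI)
  fix x y z assume "x \<in> carrier (gauss_mod_ring m)" "y \<in> carrier (gauss_mod_ring m)"
    "z \<in> carrier (gauss_mod_ring m)"
  then show "(x \<oplus>\<^bsub>gauss_mod_ring m\<^esub> y) \<otimes>\<^bsub>gauss_mod_ring m\<^esub> z =
      x \<otimes>\<^bsub>gauss_mod_ring m\<^esub> z \<oplus>\<^bsub>gauss_mod_ring m\<^esub> y \<otimes>\<^bsub>gauss_mod_ring m\<^esub> z"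
    by (cases x, cases y, cases z)
      (simp add: gauss_mod_ring_simps mod_mult_add_mult_eq mod_simps, simp add: algebra_simps)
qed (use assms gauss_mod_ring_abelian_group gauss_mod_ring_comm_monoid in auto)

lemma gauss_mod_ring_norm_not_dvd:
  assumes "prime p" "p mod 4 = 3"
    and "(a, b) \<in> carrier (gauss_mod_ring (int p))" "(a, b) \<noteq> \<zero>\<^bsub>gauss_mod_ring (int p)\<^esub>"
  shows "\<not> int p dvd a\<^sup>2 + b\<^sup>2"
proof
  assume "int p dvd a\<^sup>2 + b\<^sup>2"
  then have "int p dvd a" "int p dvd b" using prime_3_mod_4_dvd_sum_squares[OF assms(1,2)] by blast+
  then show False using assms(3,4) by (auto simp: gauss_mod_ring_simps zdvd_not_zless)
qed

lemma gauss_mod_ring_field: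
  assumes "prime p" "p mod 4 = 3"
  shows "field (gauss_mod_ring (int p))"
proof -
  have p1: "int p > 1" using assms prime_gt_1_nat by auto
  interpret R: cring "gauss_mod_ring (int p)" using gauss_mod_ring_cring[OF p1] .
  show ?thesis
  proof (rule R.cring_fieldI2)
    fix x assume x: "x \<in> carrier (gauss_mod_ring p)" "x \<noteq> \<zero>\<^bsub>gauss_mod_ring p\<^esub>"
    obtain a b where ab: "x = (a, b)" by fastforce
    then have "coprime (int p) (a\<^sup>2 + b\<^sup>2)"
      using gauss_mod_ring_norm_not_dvd[OF assms] x assms(1) by (simp add: prime_imp_coprime)
    then obtain t where t: "[(a\<^sup>2 + b\<^sup>2) * t = 1] (mod int p)"
      using cong_solve_coprime_int coprime_commute by blast
    have "(a * (a * t) - b * (- b * t)) mod int p = ((a\<^sup>2 + b\<^sup>2) * t) mod int p"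
      by (simp add: algebra_simps power2_eq_square)
    also have "\<dots> = 1" using t p1 by (simp add: cong_def)
    finally have inv: "(a * (a * t) - b * (- b * t)) mod int p = 1" .
    show "\<exists>y\<in>carrier (gauss_mod_ring p). x \<otimes>\<^bsub>gauss_mod_ring p\<^esub> y = \<one>\<^bsub>gauss_mod_ring p\<^esub>"
    proof (rule bexI[of _ "((a * t) mod p, (- b * t) mod p)"])
      show "x \<otimes>\<^bsub>gauss_mod_ring p\<^esub> ((a * t) mod p, (- b * t) mod p) = \<one>\<^bsub>gauss_mod_ring p\<^esub>"
        using inv by (simp add: ab gauss_mod_ring_simps mod_mult_add_mult_eq algebra_simps)
    qed (use p1 in \<open>simp add: gauss_mod_ring_simps\<close>)
  qed (simp add: gauss_mod_ring_simps)
qed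

definition gauss_reduce :: "int \<Rightarrow> complex \<Rightarrow> int \<times> int" where
  "gauss_reduce m z = (\<lfloor>Re z\<rfloor> mod m, \<lfloor>Im z\<rfloor> mod m)"

lemma gauss_reduce_gauss_int: "gauss_reduce m (gauss_int a b) = (a mod m, b mod m)"
  by (simp add: gauss_reduce_def gauss_int_def)

lemma gauss_reduce_in_carrier: "m > 0 \<Longrightarrow> gauss_reduce m z \<in> carrier (gauss_mod_ring m)"
  by (simp add: gauss_reduce_def gauss_mod_ring_simps)

lemma gauss_reduce_mult:
  assumes "z \<in> gauss_ints" "w \<in> gauss_ints"
  shows "gauss_reduce m (z * w) = gauss_reduce m z \<otimes>\<^bsub>gauss_mod_ring m\<^esub> gauss_reduce m w"
  using assms by (auto elim!: gauss_intsE
      simp: gauss_int_mult gauss_reduce_gauss_int gauss_mod_ring_simps mod_mult_add_mult_eq)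

lemma gauss_reduce_one: "m > 1 \<Longrightarrow> gauss_reduce m 1 = \<one>\<^bsub>gauss_mod_ring m\<^esub>"
  by (simp add: gauss_reduce_def gauss_mod_ring_simps)

lemma gauss_reduce_power:
  assumes "m > 1" "z \<in> gauss_ints"
  shows "gauss_reduce m (z ^ k) = gauss_reduce m z [^]\<^bsub>gauss_mod_ring m\<^esub> k"
proof (induction k)
  case (Suc k)
  have "gauss_reduce m (z ^ Suc k) = gauss_reduce m (z ^ k * z)" by (simp only: power_Suc2)
  then show ?case using Suc assms(2) by (simp add: gauss_reduce_mult)
qed (simp add: assms gauss_reduce_one)

lemma gauss_reduce_eq_iff_gcong:
  assumes "z \<in> gauss_ints" "w \<in> gauss_ints"
  shows "gauss_reduce (int m) z = gauss_reduce (int m) w \<longleftrightarrow> gcong m z w"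
  using assms by (auto elim!: gauss_intsE simp: gauss_reduce_gauss_int gcong_gauss_int cong_def)

lemma gauss_reduce_cnj:
  fixes p :: nat
  assumes "prime p" "p mod 4 = 3" "z \<in> gauss_ints"
  shows "gauss_reduce p (cnj z) = gauss_reduce p z [^]\<^bsub>gauss_mod_ring p\<^esub> p"
proof -
  have "gauss_reduce p (cnj z) = gauss_reduce p (z ^ p)"
    using gcong_frobenius[OF assms] assms(3) by (simp add: gauss_reduce_eq_iff_gcong gcong_sym)
  then show ?thesis using assms(3) prime_gt_1_nat[OF assms(1)] by (simp add: gauss_reduce_power)
qed

lemma card_gauss_mod_ring: "card (carrier (gauss_mod_ring (int m))) = m * m"
  by (simp add: gauss_mod_ring_simps card_cartesian_product)

section \<open>Gaussian Carmichael numbers\<close>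

lemma gaussian_carmichael_prime_divisor:
  assumes gc: "gaussian_carmichael n" and sq: "squarefree n" and p: "prime p" "p dvd n"
    and norm: "\<not> int p dvd a\<^sup>2 + b\<^sup>2"
  obtains w where "w \<in> gauss_ints" "gcong p (cnj (gauss_int a b) * w) 1"
    "gcong p ((gauss_int a b * w) ^ FF n) 1"
proof -
  define m where "m = n div p"
  have n: "int n = int p * int m" using p(2) by (metis m_def dvd_mult_div_cancel of_nat_mult)
  have "coprime (int p) (int m)" using squarefree_coprime_div_prime[OF sq p] by (simp add: m_def)
  then obtain a' b' where a': "[a' = a] (mod int p)" "[a' = 1] (mod int m)"
    and b': "[b' = b] (mod int p)" "[b' = 0] (mod int m)"
    using binary_chinese_remainder_int[of "int p" "int m"] by metis
  \<comment> \<open>z agrees with gauss_int a b modulo p and is 1 modulo n/p, so its norm is prime to n\<close>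
  define z where "z = gauss_int a' b'"
  have "[a'\<^sup>2 + b'\<^sup>2 = a\<^sup>2 + b\<^sup>2] (mod int p)"
    using a'(1) b'(1) by (intro cong_add cong_pow)
  then have "\<not> int p dvd a'\<^sup>2 + b'\<^sup>2" using norm by (simp add: cong_dvd_iff)
  then have cop_p: "coprime (int p) (a'\<^sup>2 + b'\<^sup>2)" using p(1) by (simp add: prime_imp_coprime)
  have "[a'\<^sup>2 + b'\<^sup>2 = 1\<^sup>2 + 0\<^sup>2] (mod int m)"
    using a'(2) b'(2) by (intro cong_add cong_pow)
  then have cop_m: "coprime (int m) (a'\<^sup>2 + b'\<^sup>2)"
    by (metis cong_imp_coprime cong_sym coprime_1_left coprime_commute power_one zero_power2
        add_0_right)
  have "coprime (int n) (a'\<^sup>2 + b'\<^sup>2)" using cop_p cop_m by (simp add: n)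
  then have "coprime (int n) (gnorm z)" by (simp add: z_def gnorm_gauss_int)
  then obtain w where w: "w \<in> gauss_ints" "gcong n (cnj z * w) 1" "gcong n ((z * w) ^ FF n) 1"
    using gc by (auto simp: z_def gaussian_carmichael_def gaussian_fermat_psp_def)
  have zp: "gcong p (gauss_int a b) z" using a' b' by (simp add: z_def gcong_gauss_int cong_sym)
  show ?thesis
  proof (rule that[OF w(1)])
    have "gcong p (cnj (gauss_int a b) * w) (cnj z * w)"
      using w(1) zp by (simp add: gcong_mult gcong_cnj)
    then show "gcong p (cnj (gauss_int a b) * w) 1"
      using w(2) p(2) gcong_dvd_modulus gcong_trans by blast
    have "gcong p ((gauss_int a b * w) ^ FF n) ((z * w) ^ FF n)"
      using w(1) zp by (simp add: gcong_power gcong_mult z_def)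
    then show "gcong p ((gauss_int a b * w) ^ FF n) 1"
      using w(3) p(2) gcong_dvd_modulus gcong_trans by blast
  qed
qed

lemma gaussian_carmichael_prime_divisor_3_mod_4:
  assumes gc: "gaussian_carmichael n" and sq: "squarefree n"
    and p: "prime p" "p dvd n" "p mod 4 = 3"
  shows "(p + 1) dvd FF n"
proof -
  define R where "R = gauss_mod_ring (int p)"
  have p1: "int p > 1" using p(1) prime_gt_1_nat by auto
  interpret F: field R unfolding R_def using gauss_mod_ring_field p(1,3) .
  interpret G: comm_group "mult_of R" by (rule F.comm_group_mult_of)
  have "finite (carrier R)" by (simp add: R_def gauss_mod_ring_simps)
  then obtain g where g: "g \<in> carrier (mult_of R)" and ord_g: "G.ord g = p * p - 1"
    using F.finite_field_mult_group_has_elem_of_order card_gauss_mod_ring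
    by (metis R_def order_def)
  obtain a b where g_ab: "g = (a, b)" by fastforce
  define z where "z = gauss_int a b"
  have z: "z \<in> gauss_ints" by (simp add: z_def)
  have red_z: "gauss_reduce p z = g"
    using g by (auto simp: z_def g_ab R_def gauss_reduce_gauss_int gauss_mod_ring_simps)
  have "\<not> int p dvd a\<^sup>2 + b\<^sup>2"
    using gauss_mod_ring_norm_not_dvd[OF p(1,3)] g by (simp add: g_ab R_def)
  then obtain w where w: "w \<in> gauss_ints" "gcong p (cnj z * w) 1" "gcong p ((z * w) ^ FF n) 1"
    using gaussian_carmichael_prime_divisor[OF gc sq p(1,2)] unfolding z_def by blast
  define h where "h = gauss_reduce p w"
  have h: "h \<in> carrier R" using p1 by (simp add: h_def R_def gauss_reduce_in_carrier)
  have "gauss_reduce p (cnj z * w) = gauss_reduce p 1"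
    using w z by (simp add: gauss_reduce_eq_iff_gcong)
  then have inv: "g [^]\<^bsub>R\<^esub> p \<otimes>\<^bsub>R\<^esub> h = \<one>\<^bsub>R\<^esub>"
    using p p1 w(1) z by (simp add: gauss_reduce_mult gauss_reduce_one gauss_reduce_cnj
        red_z h_def R_def)
  have "gauss_reduce p ((z * w) ^ FF n) = gauss_reduce p 1"
    using w z by (simp add: gauss_reduce_eq_iff_gcong)
  then have unit: "(g \<otimes>\<^bsub>R\<^esub> h) [^]\<^bsub>R\<^esub> FF n = \<one>\<^bsub>R\<^esub>"
    using p1 w(1) z by (simp add: gauss_reduce_mult gauss_reduce_one gauss_reduce_power
        red_z h_def R_def)
  have "h \<noteq> \<zero>\<^bsub>R\<^esub>" using inv g h by auto
  \<comment> \<open>h = g^(-p), so the image of z/cnj z is g^(1-p)\<close>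
  then have "G.ord g dvd (p - 1) * FF n"
    using G.ord_dvd_if_power_mult_eq_one[of g h p "FF n"] g h inv unit
    by (simp add: nat_pow_mult_of)
  moreover have "p * p - 1 = (p - 1) * (p + 1)" by (cases p) (simp_all add: algebra_simps)
  ultimately have "(p - 1) * (p + 1) dvd (p - 1) * FF n" by (simp add: ord_g)
  moreover have "p - 1 > 0" using prime_gt_1_nat[OF p(1)] by simp
  ultimately show ?thesis using nat_mult_dvd_cancel1 by blast
qed

text \<open>
  If s^2 = -1 (mod m), then gauss_eval s is a ring homomorphism Z[i] \<rightarrow> Z/mZ sending i to s.
\<close>

definition gauss_eval :: "int \<Rightarrow> complex \<Rightarrow> int" where
  "gauss_eval s z = \<lfloor>Re z\<rfloor> + \<lfloor>Im z\<rfloor> * s"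

lemma gauss_eval_gauss_int: "gauss_eval s (gauss_int a b) = a + b * s"
  by (simp add: gauss_eval_def gauss_int_def)

lemma gauss_eval_one: "gauss_eval s 1 = 1"
  by (simp add: gauss_eval_def)

lemma gauss_eval_cong:
  assumes "z \<in> gauss_ints" "w \<in> gauss_ints" "gcong m z w"
  shows "[gauss_eval s z = gauss_eval s w] (mod int m)"
proof -
  obtain a b c d where "z = gauss_int a b" "w = gauss_int c d"
    using assms(1,2) by (metis gauss_intsE)
  with assms(3) show ?thesis by (simp add: gcong_gauss_int gauss_eval_gauss_int cong_add cong_mult)
qed

lemma gauss_eval_mult:
  assumes s: "[s\<^sup>2 = -1] (mod m)" and "z \<in> gauss_ints" "w \<in> gauss_ints"
  shows "[gauss_eval s (z * w) = gauss_eval s z * gauss_eval s w] (mod m)"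
proof -
  obtain a b c d where zw: "z = gauss_int a b" "w = gauss_int c d"
    using assms(2,3) by (metis gauss_intsE)
  have "(a + b * s) * (c + d * s) - (a * c - b * d + (a * d + b * c) * s) = b * d * (s\<^sup>2 + 1)"
    by (simp add: algebra_simps power2_eq_square)
  moreover have "m dvd s\<^sup>2 + 1" using s by (simp add: cong_iff_dvd_diff)
  ultimately have "[(a + b * s) * (c + d * s) = a * c - b * d + (a * d + b * c) * s] (mod m)"
    by (simp add: cong_iff_dvd_diff)
  then show ?thesis by (simp add: zw gauss_int_mult gauss_eval_gauss_int cong_sym)
qed

lemma gauss_eval_power:
  assumes s: "[s\<^sup>2 = -1] (mod m)" and z: "z \<in> gauss_ints"
  shows "[gauss_eval s (z ^ k) = gauss_eval s z ^ k] (mod m)"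
proof (induction k)
  case (Suc k)
  have "[gauss_eval s (z * z ^ k) = gauss_eval s z * gauss_eval s (z ^ k)] (mod m)"
    using gauss_eval_mult[OF s z] z by simp
  also have "[gauss_eval s z * gauss_eval s (z ^ k) = gauss_eval s z * gauss_eval s z ^ k] (mod m)"
    using Suc by (intro cong_mult cong_refl)
  finally show ?case by simp
qed (simp add: gauss_eval_one)

lemma gaussian_carmichael_prime_divisor_1_mod_4:
  assumes gc: "gaussian_carmichael n" and sq: "squarefree n"
    and p: "prime p" "p dvd n" "p mod 4 = 1"
  shows "[2 ^ FF n = 1] (mod int p)"
proof -
  have "p > 2" using p(3) prime_gt_1_nat[OF p(1)] by presburger
  then obtain s where s: "[s\<^sup>2 = -1] (mod int p)"
    using QuadRes_minus_one_iff[OF p(1)] p(3) by (auto simp: QuadRes_def)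
  \<comment> \<open>z and cnj z evaluate to 4s and 2s, whose quotient is 2\<close>
  define z where "z = gauss_int (3 * s) 1"
  have z: "z \<in> gauss_ints" "cnj z \<in> gauss_ints" by (simp_all add: z_def)
  have "[(3 * s)\<^sup>2 + 1\<^sup>2 = 9 * (-1) + 1] (mod int p)"
    using cong_add[OF cong_mult[OF cong_refl[of 9] s] cong_refl[of 1]]
    by (simp add: power_mult_distrib)
  moreover have "\<not> int p dvd 8"
  proof -
    have "odd p" using p(3) by presburger
    then have "\<not> p dvd 2 ^ 3" by (rule odd_prime_not_dvd_power_two[OF p(1)])
    then show ?thesis by simp presburger
  qed
  ultimately have "\<not> int p dvd (3 * s)\<^sup>2 + 1\<^sup>2" by (simp add: cong_dvd_iff)
  then obtain w where w: "w \<in> gauss_ints" "gcong p (cnj z * w) 1" "gcong p ((z * w) ^ FF n) 1"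
    using gaussian_carmichael_prime_divisor[OF gc sq p(1,2)] unfolding z_def by blast
  define W where "W = gauss_eval s w"
  have "[2 * s * W = gauss_eval s (cnj z) * W] (mod int p)"
    by (simp add: z_def gauss_int_cnj gauss_eval_gauss_int)
  also have "[gauss_eval s (cnj z) * W = gauss_eval s (cnj z * w)] (mod int p)"
    unfolding W_def using gauss_eval_mult[OF s z(2) w(1)] by (rule cong_sym)
  also have "[gauss_eval s (cnj z * w) = 1] (mod int p)"
    using gauss_eval_cong[OF _ _ w(2)] w(1) z by (simp add: gauss_eval_one)
  finally have "[2 * (2 * s * W) = 2 * 1] (mod int p)" by (rule cong_mult[OF cong_refl])
  then have "[4 * s * W = 2] (mod int p)" by (simp add: mult.assoc)
  then have "[2 ^ FF n = (4 * s * W) ^ FF n] (mod int p)" by (rule cong_sym[OF cong_pow])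
  also have "[(4 * s * W) ^ FF n = gauss_eval s (z * w) ^ FF n] (mod int p)"
  proof (rule cong_pow)
    show "[4 * s * W = gauss_eval s (z * w)] (mod int p)"
      using gauss_eval_mult[OF s z(1) w(1)]
      by (simp add: W_def z_def gauss_eval_gauss_int cong_sym)
  qed
  also have "[gauss_eval s (z * w) ^ FF n = gauss_eval s ((z * w) ^ FF n)] (mod int p)"
    using gauss_eval_power[OF s, of "z * w" "FF n"] z w by (simp only: cong_sym gauss_ints_closed)
  also have "[gauss_eval s ((z * w) ^ FF n) = 1] (mod int p)"
    using gauss_eval_cong[OF _ _ w(3)] z w by (simp add: gauss_eval_one)
  finally show ?thesis .
qed

lemma carmichael_gaussian_carmichael_prime_divisor_not_1_mod_4:
  assumes carm: "carmichael n" and gc: "gaussian_carmichael n" and n: "n mod 4 = 3"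
    and p: "prime p" "p dvd n"
  shows "p mod 4 \<noteq> 1"
proof
  assume p1: "p mod 4 = 1"
  have FF: "FF n = (n - 1) + 2" using n unfolding FF_def by presburger
  have "odd n" using n by presburger
  then have "[2 ^ (n - 1) = 1] (mod n)" using carm by (simp add: carmichael_def)
  then have "[2 ^ (n - 1) = 1] (mod p)" using p(2) by (rule cong_dvd_modulus_nat)
  then have "[int (2 ^ (n - 1)) = int 1] (mod int p)" by (simp only: cong_int_iff)
  then have "[2 ^ (n - 1) = 1] (mod int p)" by simp
  then have "[2 ^ (n - 1) * 4 = 1 * 4] (mod int p)" by (rule cong_scalar_right)
  then have "[1 * 4 = 2 ^ (n - 1) * 4] (mod int p)" by (rule cong_sym)
  also have "(2::int) ^ (n - 1) * 4 = 2 ^ FF n" by (simp only: FF power_add) simp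
  also have "[2 ^ FF n = 1] (mod int p)"
    using gaussian_carmichael_prime_divisor_1_mod_4[OF gc carmichael_imp_squarefree[OF carm] p p1] .
  finally have "int p dvd 3" by (simp add: cong_iff_dvd_diff)
  then have "p dvd 3" by presburger
  then show False using p1 prime_gt_1_nat[OF p(1)] by (auto dest: dvd_imp_le)
qed

lemma gaussian_carmichael_if_prime_divisors:
  assumes comp: "composite n" and sq: "squarefree n"
    and hp: "\<And>p. prime p \<Longrightarrow> p dvd n \<Longrightarrow> p mod 4 = 3 \<and> (p + 1) dvd FF n"
  shows "gaussian_carmichael n"
proof -
  have "\<exists>w\<in>gauss_ints. gcong n (cnj z * w) 1 \<and> gcong n ((z * w) ^ FF n) 1"
    if z: "z \<in> gauss_ints" and cop: "coprime (int n) (gnorm z)" for z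
  proof -
    obtain a b where z_ab: "z = gauss_int a b" using z by (rule gauss_intsE)
    have "coprime (a\<^sup>2 + b\<^sup>2) (int n)" using cop by (simp add: z_ab gnorm_gauss_int coprime_commute)
    then obtain t where t: "[(a\<^sup>2 + b\<^sup>2) * t = 1] (mod int n)"
      using cong_solve_coprime_int by blast
    define w where "w = of_int t * z"
    have w: "w \<in> gauss_ints" by (simp add: w_def z)
    have "cnj z * w = gauss_int ((a\<^sup>2 + b\<^sup>2) * t) 0"
      by (simp add: w_def z_ab gauss_int_cnj gauss_int_mult gauss_int_of_int
          algebra_simps power2_eq_square)
    then have inv: "gcong n (cnj z * w) 1" using t by (simp add: gauss_int_one gcong_gauss_int)
    define u where "u = z * w"
    have u: "u \<in> gauss_ints" by (simp add: u_def z w)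
    have "gcong p (u ^ FF n) 1" if p: "prime p" "p dvd n" for p
    proof -
      obtain k where k: "FF n = (p + 1) * k" using hp[OF p] by (auto elim: dvdE)
      have "gcong p (cnj z * w) 1" using p(2) inv by (rule gcong_dvd_modulus)
      then have "gcong p ((cnj z * w) * cnj (cnj z * w)) (1 * cnj 1)"
        using z w by (intro gcong_mult gcong_cnj) auto
      moreover have "(cnj z * w) * cnj (cnj z * w) = u * cnj u" by (simp add: u_def)
      ultimately have "gcong p (u ^ (p + 1)) 1"
        using gcong_power_Suc_prime_if_norm_one[OF p(1) _ u] hp[OF p] by simp
      then have "gcong p ((u ^ (p + 1)) ^ k) (1 ^ k)" using u by (intro gcong_power) auto
      then show ?thesis by (simp only: k power_mult power_one)
    qed
    then have "gcong n (u ^ FF n) 1" using u by (intro gcong_squarefree_modulus[OF sq]) auto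
    then show ?thesis using w inv by (auto simp: u_def)
  qed
  then show ?thesis using comp by (simp add: gaussian_carmichael_def gaussian_fermat_psp_def)
qed

theorem mainTheorem16:
  fixes n :: nat
  assumes "n > 0" and "n mod 4 = 3"
  shows "(carmichael n \<and> gaussian_carmichael n) \<longleftrightarrow>
         (williams1 n \<and> (\<forall>p. prime p \<and> p dvd n \<longrightarrow> p mod 4 = 3))"
proof -
  have FF: "FF n = n + 1" using assms(2) by (simp add: FF_def)
  have "odd n" using assms(2) by presburger
  have "williams1 n \<and> (\<forall>p. prime p \<and> p dvd n \<longrightarrow> p mod 4 = 3)"
    if carm: "carmichael n" and gc: "gaussian_carmichael n"
  proof -
    have sq: "squarefree n" using carm by (simp add: korselt)
    have p3: "p mod 4 = 3" if "prime p" "p dvd n" for p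
    proof -
      have "odd p" using \<open>odd n\<close> that(2) dvd_trans by blast
      then show ?thesis
        using carmichael_gaussian_carmichael_prime_divisor_not_1_mod_4[OF carm gc assms(2) that]
        by presburger
    qed
    then show ?thesis
      using carm gaussian_carmichael_prime_divisor_3_mod_4[OF gc sq] FF
      by (auto simp: williams1_def korselt)
  qed
  moreover have "carmichael n \<and> gaussian_carmichael n"
    if "williams1 n" "\<forall>p. prime p \<and> p dvd n \<longrightarrow> p mod 4 = 3"
    using that gaussian_carmichael_if_prime_divisors[of n] FF
    by (auto simp: williams1_def korselt)
  ultimately show ?thesis by blast
qed

end
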